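(* Consider the sub-$\ell^\infty$ structure on $\mathbb{R}^3$ defined by $X_1=\partial_x+y^2\partial_z$, $X_2=\partial_y$. If an extremal pair $(\lambda,\gamma)$ restricted to an open interval $I$ is an abnormal arc and $\gamma$ is not constant on $I$, then $\gamma(I)$ is contained in a line $\{y=0,\ z=z_0\}$ for some $z_0\in\mathbb{R}$. Conversely, every admissible trajectory contained in such a line admits an extremal lift whose restriction to its whole domain is an abnormal arc.
   Context: Sub-$\ell^\infty$ structure defined by smooth vector fields $X_1,\dots,X_k$ on a manifold $M$: an admissible trajectory is an absolutely continuous curve $\gamma:[0,T]\to M$ together with a measurable control $u=(u_1,\dots,u_k):[0,T]\to\mathbb{R}^k$ with $|u_i(t)|\le1$ for all $i$ and a.e. $t$, such that $\dot\gamma(t)=\sum_i u_i(t)X_i(\gamma(t))$ for a.e. $t$. An extremal pair is a pair $(\lambda,\gamma)$ where $\gamma$ is admissible with control $u$ and $\lambda:[0,T]\to T^*M$ is absolutely continuous with $\lambda(t)\in T^*_{\gamma(t)}M\setminus\{0\}$, such that, with $\mathcal H(\lambda,p,u)=\sum_i u_i\langle\lambda,X_i(p)\rangle$, in canonical coordinates $\dot\lambda=-\partial_p\mathcal H(\lambda,\gamma,u)$, $\dot\gamma=\partial_\lambda\mathcal H(\lambda,\gamma,u)$ a.e., and there is a constant $\lambda_0\ge0$ with $\sum_iu_i(t)\langle\lambda(t),X_i(\gamma(t))\rangle=\sum_i|\langle\lambda(t),X_i(\gamma(t))\rangle|=\lambda_0$ for a.e. $t$; $\gamma$ is then an extremal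 trajectory and $\lambda$ an extremal lift. The switching functions are $\varphi_j(t)=\langle\lambda(t),X_j(\gamma(t))\rangle$. The restriction of an extremal pair to an open interval $I$ is an abnormal arc if $\varphi_j\equiv0$ on $I$ for all $j=1,\dots,k$. *)

theory Defs
  imports "HOL-Analysis.Analysis"
begin

text \<open>Points of R^3 and covectors are triples (x, y, z); the pairing of a covector
 with a tangent vector is the standard inner product on the product type.\<close>

definition xc :: "real \<times> real \<times> real \<Rightarrow> real" where "xc p = fst p"
definition yc :: "real \<times> real \<times> real \<Rightarrow> real" where "yc p = fst (snd p)"
definition zc :: "real \<times> real \<times> real \<Rightarrow> real" where "zc p = snd (snd p)"

definition abs_cont_on :: "real set \<Rightarrow> (real \<Rightarrow> 'a::real_normed_vector) \<Rightarrow> bool" where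
  "abs_cont_on S f \<longleftrightarrow>
     (\<forall>\<epsilon>>0. \<exists>\<delta>>0. \<forall>(n::nat) (a::nat \<Rightarrow> real) (b::nat \<Rightarrow> real).
        (\<forall>i<n. a i \<le> b i \<and> {a i..b i} \<subseteq> S) \<longrightarrow>
        (\<forall>i<n. \<forall>j<n. i \<noteq> j \<longrightarrow> b i \<le> a j \<or> b j \<le> a i) \<longrightarrow>
        (\<Sum>i<n. b i - a i) < \<delta> \<longrightarrow>
        (\<Sum>i<n. norm (f (b i) - f (a i))) < \<epsilon>)"

definition X1 :: "real \<times> real \<times> real \<Rightarrow> real \<times> real \<times> real" where
  "X1 p = (1, 0, (yc p)^2)"
definition X2 :: "real \<times> real \<times> real \<Rightarrow> real \<times> real \<times> real" where
  "X2 p = (0, 1, 0)"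

definition admissible ::
  "real \<Rightarrow> (real \<Rightarrow> real \<times> real \<times> real) \<Rightarrow> (real \<Rightarrow> real) \<Rightarrow> (real \<Rightarrow> real) \<Rightarrow> bool" where
  "admissible T \<gamma> u1 u2 \<longleftrightarrow>
     abs_cont_on {0..T} \<gamma> \<and>
     u1 \<in> borel_measurable (lebesgue_on {0..T}) \<and>
     u2 \<in> borel_measurable (lebesgue_on {0..T}) \<and>
     (AE t in lebesgue_on {0..T}. \<bar>u1 t\<bar> \<le> 1 \<and> \<bar>u2 t\<bar> \<le> 1 \<and>
        (\<gamma> has_vector_derivative (u1 t *\<^sub>R X1 (\<gamma> t) + u2 t *\<^sub>R X2 (\<gamma> t))) (at t))"

definition phi1 :: "(real \<Rightarrow> real \<times> real \<times> real) \<Rightarrow> (real \<Rightarrow> real \<times> real \<times> real) \<Rightarrow> real \<Rightarrow> real" where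
  "phi1 lam \<gamma> t = lam t \<bullet> X1 (\<gamma> t)"
definition phi2 :: "(real \<Rightarrow> real \<times> real \<times> real) \<Rightarrow> (real \<Rightarrow> real \<times> real \<times> real) \<Rightarrow> real \<Rightarrow> real" where
  "phi2 lam \<gamma> t = lam t \<bullet> X2 (\<gamma> t)"

text \<open>With H(lambda,p,u) = u1 (lambda_x + y^2 lambda_z) + u2 lambda_y,
 the adjoint equation lambda' = - d_p H reads lambda' = (0, -2 u1 y lambda_z, 0);
 the state equation gamma' = d_lambda H is the admissibility ODE.\<close>
definition extremal_pair ::
  "real \<Rightarrow> (real \<Rightarrow> real \<times> real \<times> real) \<Rightarrow> (real \<Rightarrow> real \<times> real \<times> real)
     \<Rightarrow> (real \<Rightarrow> real) \<Rightarrow> (real \<Rightarrow> real) \<Rightarrow> bool" where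
  "extremal_pair T lam \<gamma> u1 u2 \<longleftrightarrow>
     admissible T \<gamma> u1 u2 \<and>
     abs_cont_on {0..T} lam \<and>
     (\<forall>t\<in>{0..T}. lam t \<noteq> 0) \<and>
     (AE t in lebesgue_on {0..T}.
        (lam has_vector_derivative (0, - 2 * u1 t * yc (\<gamma> t) * zc (lam t), 0)) (at t)) \<and>
     (\<exists>lam0\<ge>0. AE t in lebesgue_on {0..T}.
        u1 t * phi1 lam \<gamma> t + u2 t * phi2 lam \<gamma> t = lam0 \<and>
        \<bar>phi1 lam \<gamma> t\<bar> + \<bar>phi2 lam \<gamma> t\<bar> = lam0)"

definition abnormal_arc ::
  "(real \<Rightarrow> real \<times> real \<times> real) \<Rightarrow> (real \<Rightarrow> real \<times> real \<times> real) \<Rightarrow> real \<Rightarrow> real \<Rightarrow> bool" where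
  "abnormal_arc lam \<gamma> a b \<longleftrightarrow> (\<forall>t\<in>{a<..<b}. phi1 lam \<gamma> t = 0 \<and> phi2 lam \<gamma> t = 0)"

end

theory Submission
  imports Defs
begin

text \<open>On an abnormal arc both switching functions \<open>\<lambda>\<^sub>x + y\<^sup>2 \<lambda>\<^sub>z\<close> and \<open>\<lambda>\<^sub>y\<close>
  vanish. The adjoint equation makes \<open>\<lambda>\<^sub>x\<close> and \<open>\<lambda>\<^sub>z\<close> constant, and \<open>\<lambda>\<^sub>z \<noteq> 0\<close>
  because \<open>\<lambda> \<noteq> 0\<close>; hence \<open>y\<^sup>2\<close> is constant. Differentiating \<open>\<lambda>\<^sub>y \<equiv> 0\<close> gives
  \<open>u\<^sub>1 y = 0\<close> and differentiating \<open>y\<^sup>2\<close> gives \<open>u\<^sub>2 y = 0\<close> almost everywhere. If \<open>y\<close>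
  vanishes somewhere, then \<open>y \<equiv> 0\<close> and \<open>z' = u\<^sub>1 y\<^sup>2 = 0\<close>; otherwise
  \<open>u\<^sub>1 = u\<^sub>2 = 0\<close> and \<open>\<gamma>\<close> is constant. Conversely, along a line \<open>{y = 0, z = z\<^sub>0}\<close> the constant covector
  \<open>(0, 0, 1)\<close> is an abnormal lift.

  The analytic input is that an absolutely continuous function with zero derivative almost
  everywhere is constant. Given a gauge-fine tagged division, the intervals tagged outside the
  null set contribute little because the derivative vanishes at their tags, and those tagged
  inside it lie in an open set of small measure, so absolute continuity controls them.\<close>

lemma abs_cont_on_subset:
  assumes "abs_cont_on S f" "T \<subseteq> S"
  shows "abs_cont_on T f"
  unfolding abs_cont_on_def
proof (intro allI impI)
  fix \<epsilon> :: real assume "\<epsilon> > 0"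
  then obtain \<delta> where "\<delta> > 0" and \<delta>: "\<And>(n::nat) a b. \<forall>i<n. a i \<le> b i \<and> {a i..b i} \<subseteq> S \<Longrightarrow>
      \<forall>i<n. \<forall>j<n. i \<noteq> j \<longrightarrow> b i \<le> a j \<or> b j \<le> a i \<Longrightarrow>
      (\<Sum>i<n. b i - a i) < \<delta> \<Longrightarrow> (\<Sum>i<n. norm (f (b i) - f (a i))) < \<epsilon>"
    using assms(1) unfolding abs_cont_on_def by blast
  show "\<exists>\<delta>>0. \<forall>(n::nat) a b. (\<forall>i<n. a i \<le> b i \<and> {a i..b i} \<subseteq> T) \<longrightarrow>
      (\<forall>i<n. \<forall>j<n. i \<noteq> j \<longrightarrow> b i \<le> a j \<or> b j \<le> a i) \<longrightarrow>
      (\<Sum>i<n. b i - a i) < \<delta> \<longrightarrow> (\<Sum>i<n. norm (f (b i) - f (a i))) < \<epsilon>"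
    by (intro exI[of _ \<delta>] conjI allI impI \<open>\<delta> > 0\<close> \<delta>) (use assms(2) in blast)+
qed

lemma abs_cont_on_compose_nonexpansive:
  assumes "abs_cont_on S f" and nonexp: "\<And>x y. norm (h x - h y) \<le> norm (x - y)"
  shows "abs_cont_on S (\<lambda>t. h (f t))"
  unfolding abs_cont_on_def
proof (intro allI impI)
  fix \<epsilon> :: real assume "\<epsilon> > 0"
  then obtain \<delta> where "\<delta> > 0" and \<delta>: "\<forall>(n::nat) a b. (\<forall>i<n. a i \<le> b i \<and> {a i..b i} \<subseteq> S) \<longrightarrow>
      (\<forall>i<n. \<forall>j<n. i \<noteq> j \<longrightarrow> b i \<le> a j \<or> b j \<le> a i) \<longrightarrow>
      (\<Sum>i<n. b i - a i) < \<delta> \<longrightarrow> (\<Sum>i<n. norm (f (b i) - f (a i))) < \<epsilon>"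
    using assms(1) unfolding abs_cont_on_def by blast
  have sum_le: "(\<Sum>i<n. norm (h (f (b i)) - h (f (a i)))) \<le> (\<Sum>i<n. norm (f (b i) - f (a i)))"
    for n :: nat and a b :: "nat \<Rightarrow> real"
    by (rule sum_mono) (rule nonexp)
  show "\<exists>\<delta>>0. \<forall>(n::nat) a b. (\<forall>i<n. a i \<le> b i \<and> {a i..b i} \<subseteq> S) \<longrightarrow>
      (\<forall>i<n. \<forall>j<n. i \<noteq> j \<longrightarrow> b i \<le> a j \<or> b j \<le> a i) \<longrightarrow>
      (\<Sum>i<n. b i - a i) < \<delta> \<longrightarrow> (\<Sum>i<n. norm (h (f (b i)) - h (f (a i)))) < \<epsilon>"
    by (intro exI[of _ \<delta>] conjI allI impI \<open>\<delta> > 0\<close> le_less_trans[OF sum_le]) (use \<delta> in blast)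
qed

lemma interior_disjoint_atLeastAtMost:
  fixes u v u' v' :: real
  assumes "u < v" "u' < v'" "interior {u..v} \<inter> interior {u'..v'} = {}"
  shows "v \<le> u' \<or> v' \<le> u"
proof (rule ccontr)
  assume "\<not> ?thesis"
  then have "(max u u' + min v v') / 2 \<in> {u<..<v} \<inter> {u'<..<v'}"
    using assms(1,2) by (auto simp: max_def min_def)
  with assms(3) show False by simp
qed

lemma abs_cont_on_nondegenerate_tagged_partial_division:
  fixes f :: "real \<Rightarrow> 'a::real_normed_vector"
  assumes "abs_cont_on S f" "e > 0"
  obtains \<delta> where "\<delta> > 0" and "\<And>p. p tagged_partial_division_of S \<Longrightarrow>
      (\<And>x K. (x,K) \<in> p \<Longrightarrow> Inf K < Sup K) \<Longrightarrow>
      (\<Sum>(x,K)\<in>p. measure lebesgue K) < \<delta> \<Longrightarrow> (\<Sum>(x,K)\<in>p. norm (f (Sup K) - f (Inf K))) < e"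
proof -
  obtain \<delta> where "\<delta> > 0" and \<delta>: "\<And>(n::nat) a b. \<forall>i<n. a i \<le> b i \<and> {a i..b i} \<subseteq> S \<Longrightarrow>
      \<forall>i<n. \<forall>j<n. i \<noteq> j \<longrightarrow> b i \<le> a j \<or> b j \<le> a i \<Longrightarrow>
      (\<Sum>i<n. b i - a i) < \<delta> \<Longrightarrow> (\<Sum>i<n. norm (f (b i) - f (a i))) < e"
    using assms unfolding abs_cont_on_def by blast
  have "(\<Sum>(x,K)\<in>p. norm (f (Sup K) - f (Inf K))) < e"
    if p: "p tagged_partial_division_of S" and nondegenerate: "\<And>x K. (x,K) \<in> p \<Longrightarrow> Inf K < Sup K"
      and small: "(\<Sum>(x,K)\<in>p. measure lebesgue K) < \<delta>" for p
  proof -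
    note p_props = tagged_partial_division_ofD[OF p]
    obtain h where h: "bij_betw h {..<card p} p"
      using ex_bij_betw_nat_finite[OF p_props(1)] by (auto simp: lessThan_atLeast0)
    define a where "a i = Inf (snd (h i))" for i
    define b where "b i = Sup (snd (h i))" for i
    have hp: "h i \<in> p" if "i < card p" for i
      using h that by (auto simp: bij_betw_def)
    have h_interval: "snd (h i) = {a i..b i} \<and> a i < b i \<and> {a i..b i} \<subseteq> S" if i: "i < card p" for i
    proof -
      obtain x K where xK: "h i = (x,K)" "(x,K) \<in> p"
        using hp[OF i] by (cases "h i") auto
      then obtain u v where "K = {u..v}"
        using p_props(4) by (metis box_real(2))
      moreover have "x \<in> K" "K \<subseteq> S" "Inf K < Sup K"
        using p_props(2,3) nondegenerate xK(2) by auto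
      ultimately show ?thesis
        using xK(1) by (auto simp: a_def b_def)
    qed
    have sum_reindex: "(\<Sum>(x,K)\<in>p. g K) = (\<Sum>i<card p. g {a i..b i})" for g :: "real set \<Rightarrow> real"
    proof -
      have "(\<Sum>(x,K)\<in>p. g K) = (\<Sum>i<card p. g (snd (h i)))"
        using sum.reindex_bij_betw[OF h, of "\<lambda>(x,K). g K"] by (simp add: split_def)
      also have "\<dots> = (\<Sum>i<card p. g {a i..b i})"
        using h_interval by simp
      finally show ?thesis .
    qed
    have "b i \<le> a j \<or> b j \<le> a i" if "i < card p" "j < card p" "i \<noteq> j" for i j
    proof -
      have "h i \<noteq> h j" using h that by (auto simp: bij_betw_def inj_on_def)
      then have "interior (snd (h i)) \<inter> interior (snd (h j)) = {}"
        using hp that p_props(5)[of "fst (h i)" "snd (h i)" "fst (h j)" "snd (h j)"] by auto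
      then show ?thesis
        using h_interval that by (intro interior_disjoint_atLeastAtMost) auto
    qed
    moreover have "(\<Sum>i<card p. b i - a i) < \<delta>"
      using small sum_reindex[of "measure lebesgue"] h_interval by (simp add: less_imp_le)
    ultimately have "(\<Sum>i<card p. norm (f (b i) - f (a i))) < e"
      using h_interval by (intro \<delta>) (auto simp: less_imp_le)
    then show ?thesis
      using sum_reindex[of "\<lambda>K. norm (f (Sup K) - f (Inf K))"] h_interval by (simp add: less_imp_le)
  qed
  with \<open>\<delta> > 0\<close> that show thesis by blast
qed

text \<open>Degenerate intervals are dropped first: they contribute nothing to either sum, but a point
  inside another interval would violate the non-overlap condition of \<open>abs_cont_on\<close>.\<close>
lemma abs_cont_on_tagged_partial_division:
  fixes f :: "real \<Rightarrow> 'a::real_normed_vector"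
  assumes "abs_cont_on S f" "e > 0"
  obtains \<delta> where "\<delta> > 0" and "\<And>p. p tagged_partial_division_of S \<Longrightarrow>
      (\<Sum>(x,K)\<in>p. measure lebesgue K) < \<delta> \<Longrightarrow> (\<Sum>(x,K)\<in>p. norm (f (Sup K) - f (Inf K))) < e"
proof -
  obtain \<delta> where "\<delta> > 0" and nondegenerate: "\<And>p. p tagged_partial_division_of S \<Longrightarrow>
      (\<And>x K. (x,K) \<in> p \<Longrightarrow> Inf K < Sup K) \<Longrightarrow>
      (\<Sum>(x,K)\<in>p. measure lebesgue K) < \<delta> \<Longrightarrow> (\<Sum>(x,K)\<in>p. norm (f (Sup K) - f (Inf K))) < e"
    using abs_cont_on_nondegenerate_tagged_partial_division[OF assms] by blast
  have "(\<Sum>(x,K)\<in>p. norm (f (Sup K) - f (Inf K))) < e"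
    if p: "p tagged_partial_division_of S" and small: "(\<Sum>(x,K)\<in>p. measure lebesgue K) < \<delta>" for p
  proof -
    note p_props = tagged_partial_division_ofD[OF p]
    define q where "q = {(x,K) \<in> p. Inf K < Sup K}"
    have "q \<subseteq> p" by (auto simp: q_def)
    have drop_degenerate: "(\<Sum>(x,K)\<in>p. g K) = (\<Sum>(x,K)\<in>q. g K)"
      if "\<And>u. g {u..u} = 0" for g :: "real set \<Rightarrow> real"
    proof -
      have "g K = 0" if xK: "(x,K) \<in> p - q" for x K
      proof -
        obtain u v where "K = {u..v}" "u \<le> v"
          using p_props(2,4)[of x K] xK by fastforce
        with xK \<open>\<And>u. g {u..u} = 0\<close> show ?thesis by (auto simp: q_def)
      qed
      then show ?thesis
        using \<open>q \<subseteq> p\<close> p_props(1) by (intro sum.mono_neutral_right) auto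
    qed
    have "(\<Sum>(x,K)\<in>q. norm (f (Sup K) - f (Inf K))) < e"
      using small drop_degenerate[of "measure lebesgue"]
      by (intro nondegenerate tagged_partial_division_subset[OF p \<open>q \<subseteq> p\<close>]) (auto simp: q_def)
    then show ?thesis
      using drop_degenerate[of "\<lambda>K. norm (f (Sup K) - f (Inf K))"] by simp
  qed
  with \<open>\<delta> > 0\<close> that show thesis by blast
qed

lemma null_set_open_superset:
  assumes N: "N \<in> null_sets lebesgue" and "\<delta> > 0"
  obtains T where "open T" "N \<subseteq> T" "T \<in> lmeasurable" "measure lebesgue T < \<delta>"
proof -
  obtain T where T: "open T" "N \<subseteq> T" "T - N \<in> lmeasurable" "emeasure lebesgue (T - N) < ennreal \<delta>"
    using sets_lebesgue_outer_open[OF null_setsD2[OF N] \<open>\<delta> > 0\<close>] by blast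
  have "(T - N) \<union> N \<in> lmeasurable"
    using T(3) fmeasurableI_null_sets[OF N] by (rule fmeasurable.Un)
  moreover have "(T - N) \<union> N = T"
    using T(2) by blast
  ultimately have "T \<in> lmeasurable" by simp
  moreover have "measure lebesgue T = measure lebesgue (T - N)"
    using \<open>T \<in> lmeasurable\<close> N by (simp add: measure_Diff_null_set)
  moreover have "measure lebesgue (T - N) < \<delta>"
    using T(4) \<open>\<delta> > 0\<close> by (simp add: emeasure_eq_measure2[OF T(3)] ennreal_less_iff)
  ultimately show thesis
    using that T(1,2) by simp
qed

lemma sum_measure_tagged_partial_division_le:
  fixes T :: "'a::euclidean_space set"
  assumes p: "p tagged_partial_division_of S" and "\<Union>(snd ` p) \<subseteq> T" "T \<in> lmeasurable"
  shows "(\<Sum>(x,K)\<in>p. measure lebesgue K) \<le> measure lebesgue T"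
proof -
  have "(\<Sum>(x,K)\<in>p. measure lebesgue K) = (\<Sum>K\<in>snd ` p. measure lebesgue K)"
    by (rule sum.over_tagged_division_lemma[OF tagged_partial_division_of_Union_self[OF p]])
      (simp add: content_eq_0_interior)
  also have "\<dots> = measure lebesgue (\<Union>(snd ` p))"
    by (rule content_division[OF partial_division_of_tagged_division[OF p]])
  also have "\<dots> \<le> measure lebesgue T"
    using assms lmeasurable_division[OF partial_division_of_tagged_division[OF p]]
    by (intro measure_mono_fmeasurable) auto
  finally show ?thesis .
qed

lemma zero_derivative_gauge:
  fixes f :: "real \<Rightarrow> 'a::real_normed_vector"
  assumes "open T" "N \<subseteq> T" "e > 0"
    and deriv: "\<And>t. t \<in> S \<Longrightarrow> t \<notin> N \<Longrightarrow> (f has_vector_derivative 0) (at t)"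
  obtains r where "\<And>t. r t > 0" "\<And>t. t \<in> N \<Longrightarrow> ball t (r t) \<subseteq> T"
    "\<And>t s. t \<in> S \<Longrightarrow> t \<notin> N \<Longrightarrow> s \<in> ball t (r t) \<Longrightarrow> norm (f s - f t) \<le> e * dist s t"
proof -
  have "\<exists>r>0. (t \<in> N \<longrightarrow> ball t r \<subseteq> T) \<and>
      (t \<in> S \<and> t \<notin> N \<longrightarrow> (\<forall>s\<in>ball t r. norm (f s - f t) \<le> e * dist s t))" for t
  proof (cases "t \<in> N")
    case True
    with assms(1,2) show ?thesis by (meson openE subsetD)
  next
    case False
    show ?thesis
    proof (cases "t \<in> S")
      case True
      with False deriv have "(f has_derivative (\<lambda>h. h *\<^sub>R 0)) (at t)"
        by (simp add: has_vector_derivative_def)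
      with \<open>e > 0\<close> obtain r where "r > 0" "\<forall>s. norm (s - t) < r \<longrightarrow> norm (f s - f t) \<le> e * norm (s - t)"
        unfolding has_derivative_at_alt by force
      with False show ?thesis by (auto simp: dist_norm dist_commute)
    qed (use False in \<open>auto intro!: exI[of _ 1]\<close>)
  qed
  then obtain r where "\<And>t. r t > 0 \<and> (t \<in> N \<longrightarrow> ball t (r t) \<subseteq> T) \<and>
      (t \<in> S \<and> t \<notin> N \<longrightarrow> (\<forall>s\<in>ball t (r t). norm (f s - f t) \<le> e * dist s t))"
    by metis
  with that show thesis by blast
qed

lemma norm_diff_le_through_point:
  fixes f :: "real \<Rightarrow> 'a::real_normed_vector"
  assumes "x \<in> {u..v}" "norm (f u - f x) \<le> e * (x - u)" "norm (f v - f x) \<le> e * (v - x)"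
  shows "norm (f v - f u) \<le> e * (v - u)"
proof -
  have "norm (f x - f u) \<le> e * (x - u)"
    using assms(2) by (simp add: norm_minus_commute)
  with assms(3) have "norm (f v - f u) \<le> e * (v - x) + e * (x - u)"
    by (rule norm_diff_triangle_le)
  also have "\<dots> = e * (v - u)"
    by (simp add: algebra_simps)
  finally show ?thesis .
qed

lemma abs_cont_on_zero_derivative_ae_estimate:
  fixes f :: "real \<Rightarrow> 'a::real_normed_vector"
  assumes "c \<le> d" "abs_cont_on {c..d} f" "N \<in> null_sets lebesgue"
    and deriv: "\<And>t. t \<in> {c..d} \<Longrightarrow> t \<notin> N \<Longrightarrow> (f has_vector_derivative 0) (at t)"
    and "e > 0"
  shows "norm (f d - f c) \<le> e * (d - c) + e"
proof -
  obtain \<delta> where "\<delta> > 0" and AC: "\<And>p. p tagged_partial_division_of {c..d} \<Longrightarrow>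
      (\<Sum>(x,K)\<in>p. measure lebesgue K) < \<delta> \<Longrightarrow> (\<Sum>(x,K)\<in>p. norm (f (Sup K) - f (Inf K))) < e"
    using abs_cont_on_tagged_partial_division[OF assms(2) \<open>e > 0\<close>] by blast
  obtain T where T: "open T" "N \<subseteq> T" "T \<in> lmeasurable" "measure lebesgue T < \<delta>"
    using null_set_open_superset[OF assms(3) \<open>\<delta> > 0\<close>] .
  obtain r where r: "\<And>t. r t > 0" "\<And>t. t \<in> N \<Longrightarrow> ball t (r t) \<subseteq> T"
    "\<And>t s. t \<in> {c..d} \<Longrightarrow> t \<notin> N \<Longrightarrow> s \<in> ball t (r t) \<Longrightarrow> norm (f s - f t) \<le> e * dist s t"
    using zero_derivative_gauge[OF T(1,2) \<open>e > 0\<close> deriv] by blast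
  have "gauge (\<lambda>t. ball t (r t))"
    using r(1) by (simp add: gauge_ball_dependent)
  then obtain p where p: "p tagged_division_of {c..d}" and fine: "(\<lambda>t. ball t (r t)) fine p"
    by (rule fine_division_exists_real)
  note p_props = tagged_division_ofD[OF p]
  define bad where "bad = {(x,K) \<in> p. x \<in> N}"
  have "bad \<subseteq> p" by (auto simp: bad_def)
  have bad_small: "(\<Sum>(x,K)\<in>bad. norm (f (Sup K) - f (Inf K))) < e"
  proof (rule AC)
    show bad_division: "bad tagged_partial_division_of {c..d}"
      using p \<open>bad \<subseteq> p\<close> unfolding tagged_division_of_def by (blast intro: tagged_partial_division_subset)
    have "K \<subseteq> T" if "(x,K) \<in> bad" for x K
    proof -
      have "(x,K) \<in> p" "x \<in> N" using that by (auto simp: bad_def)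
      then show ?thesis using fineD[OF fine] r(2) by blast
    qed
    then have "\<Union>(snd ` bad) \<subseteq> T" by force
    then show "(\<Sum>(x,K)\<in>bad. measure lebesgue K) < \<delta>"
      using sum_measure_tagged_partial_division_le[OF bad_division _ T(3)] T(4) by linarith
  qed
  have good: "norm (f (Sup K) - f (Inf K)) \<le> e * (Sup K - Inf K)" if "(x,K) \<in> p - bad" for x K
  proof -
    have "(x,K) \<in> p" "x \<notin> N" using that by (auto simp: bad_def)
    obtain u v where K: "K = {u..v}"
      using p_props(4)[OF \<open>(x,K) \<in> p\<close>] by (metis box_real(2))
    have "x \<in> {u..v}" "x \<in> {c..d}" and ball: "{u..v} \<subseteq> ball x (r x)"
      using p_props(2,3)[OF \<open>(x,K) \<in> p\<close>] fineD[OF fine \<open>(x,K) \<in> p\<close>] K by auto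
    then have "u \<in> ball x (r x)" "v \<in> ball x (r x)"
      using subsetD[OF ball, of u] subsetD[OF ball, of v] by auto
    then have "norm (f u - f x) \<le> e * dist u x" "norm (f v - f x) \<le> e * dist v x"
      using r(3)[OF \<open>x \<in> {c..d}\<close> \<open>x \<notin> N\<close>] by blast+
    moreover have "dist u x = x - u" "dist v x = v - x"
      using \<open>x \<in> {u..v}\<close> by (auto simp: dist_real_def)
    ultimately have "norm (f v - f u) \<le> e * (v - u)"
      by (intro norm_diff_le_through_point[OF \<open>x \<in> {u..v}\<close>]) simp_all
    with K \<open>x \<in> {u..v}\<close> show ?thesis by auto
  qed
  have "norm (f d - f c) = norm (\<Sum>(x,K)\<in>p. f (Sup K) - f (Inf K))"
    using additive_tagged_division_1[OF assms(1) p, of f] by simp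
  also have "\<dots> \<le> (\<Sum>(x,K)\<in>p. norm (f (Sup K) - f (Inf K)))"
    by (rule norm_sum[THEN order_trans]) (simp add: split_def)
  also have "\<dots> = (\<Sum>(x,K)\<in>p - bad. norm (f (Sup K) - f (Inf K))) + (\<Sum>(x,K)\<in>bad. norm (f (Sup K) - f (Inf K)))"
    using \<open>bad \<subseteq> p\<close> p_props(1) by (rule sum.subset_diff)
  also have "\<dots> \<le> (\<Sum>(x,K)\<in>p. e * (Sup K - Inf K)) + e"
  proof (rule add_mono)
    have "(\<Sum>(x,K)\<in>p - bad. norm (f (Sup K) - f (Inf K))) \<le> (\<Sum>(x,K)\<in>p - bad. e * (Sup K - Inf K))"
      using good by (intro sum_mono) auto
    also have "\<dots> \<le> (\<Sum>(x,K)\<in>p. e * (Sup K - Inf K))"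
      using p_props(1,2,4) \<open>e > 0\<close> by (intro sum_mono2) fastforce+
    finally show "(\<Sum>(x,K)\<in>p - bad. norm (f (Sup K) - f (Inf K))) \<le> \<dots>" .
  qed (use bad_small in simp)
  also have "\<dots> = e * (d - c) + e"
    using additive_tagged_division_1[OF assms(1) p, of id] by (simp add: sum_distrib_left[symmetric] split_def)
  finally show ?thesis .
qed

lemma abs_cont_on_zero_derivative_ae_eq:
  fixes f :: "real \<Rightarrow> 'a::real_normed_vector"
  assumes "c \<le> d" "abs_cont_on {c..d} f" "N \<in> null_sets lebesgue"
    and "\<And>t. t \<in> {c..d} \<Longrightarrow> t \<notin> N \<Longrightarrow> (f has_vector_derivative 0) (at t)"
  shows "f d = f c"
proof -
  have "norm (f d - f c) \<le> 0 + e" if "e > 0" for e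
  proof -
    have "e / (d - c + 1) > 0"
      using \<open>e > 0\<close> \<open>c \<le> d\<close> by simp
    have "e / (d - c + 1) * (d - c) + e / (d - c + 1) = e / (d - c + 1) * (d - c + 1)"
      by (simp add: distrib_left)
    also have "\<dots> = e"
      using \<open>c \<le> d\<close> by simp
    finally show ?thesis
      using abs_cont_on_zero_derivative_ae_estimate[OF assms \<open>e / (d - c + 1) > 0\<close>] by simp
  qed
  then have "norm (f d - f c) \<le> 0"
    by (rule field_le_epsilon)
  then show ?thesis by simp
qed

lemma abs_cont_on_zero_derivative_ae_const:
  fixes f :: "real \<Rightarrow> 'a::real_normed_vector"
  assumes ac: "abs_cont_on I f" and "is_interval I" "N \<in> null_sets lebesgue"
    and deriv: "\<And>t. t \<in> I \<Longrightarrow> t \<notin> N \<Longrightarrow> (f has_vector_derivative 0) (at t)"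
    and "s \<in> I" "t \<in> I"
  shows "f s = f t"
proof -
  have eq: "f d = f c" if "c \<in> I" "d \<in> I" "c \<le> d" for c d
  proof -
    have "{c..d} \<subseteq> I"
      using mem_is_interval_1_I[OF \<open>is_interval I\<close> \<open>c \<in> I\<close> \<open>d \<in> I\<close>] by auto
    then show ?thesis
      by (intro abs_cont_on_zero_derivative_ae_eq[OF \<open>c \<le> d\<close> abs_cont_on_subset[OF ac]
          \<open>N \<in> null_sets lebesgue\<close>] deriv) auto
  qed
  show ?thesis
  proof (cases "s \<le> t")
    case True
    with eq[OF \<open>s \<in> I\<close> \<open>t \<in> I\<close>] show ?thesis by simp
  next
    case False
    with eq[OF \<open>t \<in> I\<close> \<open>s \<in> I\<close>] show ?thesis by simp
  qed
qed

lemma has_real_derivative_locally_const: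
  fixes f :: "real \<Rightarrow> real"
  assumes "(f has_real_derivative D) (at t)" "open S" "t \<in> S" "\<And>s. s \<in> S \<Longrightarrow> f s = f t"
  shows "D = 0"
proof -
  obtain d where "d > 0" "ball t d \<subseteq> S"
    using assms(2,3) openE by blast
  show ?thesis
  proof (rule DERIV_local_const[OF assms(1) \<open>d > 0\<close>], intro allI impI)
    fix s assume "\<bar>t - s\<bar> < d"
    then have "s \<in> S"
      using \<open>ball t d \<subseteq> S\<close> by (auto simp: dist_real_def)
    then show "f t = f s"
      using assms(4) by simp
  qed
qed

lemma AE_lebesgue_on_null_set:
  assumes "AE t in lebesgue_on S. P t" "S \<in> sets lebesgue"
  obtains N where "N \<in> null_sets lebesgue" "\<And>t. t \<in> S \<Longrightarrow> t \<notin> N \<Longrightarrow> P t"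
proof -
  have "AE t in lebesgue. t \<in> S \<longrightarrow> P t"
    using assms by (simp add: AE_restrict_space_iff)
  then obtain N where "\<And>t. t \<in> space lebesgue - N \<Longrightarrow> t \<in> S \<longrightarrow> P t" "N \<in> null_sets lebesgue"
    by (rule AE_E3) blast
  with that show thesis by auto
qed

lemma coords_eq: "p = (xc p, yc p, zc p)"
  by (simp add: xc_def yc_def zc_def)

lemma coords_nonexpansive:
  shows "norm (xc p - xc q) \<le> norm (p - q)" "norm (yc p - yc q) \<le> norm (p - q)"
    "norm (zc p - zc q) \<le> norm (p - q)"
proof -
  have fst: "norm (fst z) \<le> norm z" and snd: "norm (snd z) \<le> norm z" for z :: "'a::real_normed_vector \<times> 'b::real_normed_vector"
    using norm_fst_le[where x="fst z" and y="snd z"] norm_snd_le[where x="fst z" and y="snd z"] by simp_all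
  show "norm (xc p - xc q) \<le> norm (p - q)"
    using fst[of "p - q"] by (simp add: xc_def)
  show "norm (yc p - yc q) \<le> norm (p - q)"
    using fst[of "snd (p - q)"] snd[of "p - q"] by (simp add: yc_def)
  show "norm (zc p - zc q) \<le> norm (p - q)"
    using snd[of "snd (p - q)"] snd[of "p - q"] by (simp add: zc_def)
qed

lemma abs_cont_on_coords:
  assumes "abs_cont_on S g"
  shows "abs_cont_on S (\<lambda>t. xc (g t))" "abs_cont_on S (\<lambda>t. yc (g t))" "abs_cont_on S (\<lambda>t. zc (g t))"
  by (rule abs_cont_on_compose_nonexpansive[OF assms coords_nonexpansive(1)],
      rule abs_cont_on_compose_nonexpansive[OF assms coords_nonexpansive(2)],
      rule abs_cont_on_compose_nonexpansive[OF assms coords_nonexpansive(3)])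

lemma has_vector_derivative_coords:
  assumes "(g has_vector_derivative v) (at t)"
  shows "((\<lambda>s. xc (g s)) has_real_derivative xc v) (at t)"
    "((\<lambda>s. yc (g s)) has_real_derivative yc v) (at t)"
    "((\<lambda>s. zc (g s)) has_real_derivative zc v) (at t)"
  using bounded_linear.has_vector_derivative[OF bounded_linear_fst assms]
    bounded_linear.has_vector_derivative[OF bounded_linear_fst
      bounded_linear.has_vector_derivative[OF bounded_linear_snd assms]]
    bounded_linear.has_vector_derivative[OF bounded_linear_snd
      bounded_linear.has_vector_derivative[OF bounded_linear_snd assms]]
  by (simp_all add: xc_def yc_def zc_def has_real_derivative_iff_has_vector_derivative)

lemma inner_X1: "l \<bullet> X1 p = xc l + (yc p)^2 * zc l"
  by (simp add: X1_def inner_prod_def xc_def yc_def zc_def)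

lemma inner_X2: "l \<bullet> X2 p = yc l"
  by (simp add: X2_def inner_prod_def xc_def yc_def zc_def)

locale abnormal_arc_data =
  fixes lam \<gamma> :: "real \<Rightarrow> real \<times> real \<times> real" and u1 u2 :: "real \<Rightarrow> real" and I N :: "real set"
  assumes interval: "is_interval I" and open_interval: "open I"
    and null: "N \<in> null_sets lebesgue"
    and abs_cont_state: "abs_cont_on I \<gamma>" and abs_cont_covector: "abs_cont_on I lam"
    and covector_nonzero: "\<And>t. t \<in> I \<Longrightarrow> lam t \<noteq> 0"
    and state_eq: "\<And>t. t \<in> I \<Longrightarrow> t \<notin> N \<Longrightarrow>
      (\<gamma> has_vector_derivative (u1 t *\<^sub>R X1 (\<gamma> t) + u2 t *\<^sub>R X2 (\<gamma> t))) (at t)"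
    and adjoint_eq: "\<And>t. t \<in> I \<Longrightarrow> t \<notin> N \<Longrightarrow>
      (lam has_vector_derivative (0, - 2 * u1 t * yc (\<gamma> t) * zc (lam t), 0)) (at t)"
    and switching_zero: "\<And>t. t \<in> I \<Longrightarrow> phi1 lam \<gamma> t = 0 \<and> phi2 lam \<gamma> t = 0"
begin

lemma zero_derivative_ae_const:
  fixes g :: "real \<Rightarrow> real"
  assumes "abs_cont_on I g" "\<And>t. t \<in> I \<Longrightarrow> t \<notin> N \<Longrightarrow> (g has_real_derivative 0) (at t)"
    and "s \<in> I" "t \<in> I"
  shows "g s = g t"
  using assms by (intro abs_cont_on_zero_derivative_ae_const[OF assms(1) interval null])
    (simp_all add: has_real_derivative_iff_has_vector_derivative)

lemma state_coords_derivative: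
  assumes "t \<in> I" "t \<notin> N"
  shows "((\<lambda>s. yc (\<gamma> s)) has_real_derivative u2 t) (at t)"
    "((\<lambda>s. zc (\<gamma> s)) has_real_derivative u1 t * (yc (\<gamma> t))^2) (at t)"
  using has_vector_derivative_coords(2,3)[OF state_eq[OF assms]]
  by (simp_all add: X1_def X2_def yc_def zc_def)

lemma covector_coords_derivative:
  assumes "t \<in> I" "t \<notin> N"
  shows "((\<lambda>s. xc (lam s)) has_real_derivative 0) (at t)"
    "((\<lambda>s. yc (lam s)) has_real_derivative - 2 * u1 t * yc (\<gamma> t) * zc (lam t)) (at t)"
    "((\<lambda>s. zc (lam s)) has_real_derivative 0) (at t)"
  using has_vector_derivative_coords[OF adjoint_eq[OF assms]]
  by (simp_all add: xc_def yc_def zc_def)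

lemma covector_xz_const:
  assumes "s \<in> I" "t \<in> I"
  shows "xc (lam s) = xc (lam t)" "zc (lam s) = zc (lam t)"
  using zero_derivative_ae_const[OF abs_cont_on_coords(1)[OF abs_cont_covector]
      covector_coords_derivative(1) assms]
    zero_derivative_ae_const[OF abs_cont_on_coords(3)[OF abs_cont_covector]
      covector_coords_derivative(3) assms]
  by simp_all

lemma switching_coords:
  assumes "t \<in> I"
  shows "xc (lam t) + (yc (\<gamma> t))^2 * zc (lam t) = 0" "yc (lam t) = 0"
  using switching_zero[OF assms] by (simp_all add: phi1_def phi2_def inner_X1 inner_X2)

lemma covector_z_nonzero:
  assumes "t \<in> I"
  shows "zc (lam t) \<noteq> 0"
proof
  assume "zc (lam t) = 0"
  with switching_coords[OF assms] have "lam t = (0, 0, 0)"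
    by (metis add.right_neutral coords_eq mult_zero_right)
  with covector_nonzero[OF assms] show False
    by (simp add: zero_prod_def)
qed

text \<open>The first switching function vanishes, so \<open>y\<^sup>2 = - \<lambda>\<^sub>x / \<lambda>\<^sub>z\<close> with both
  covector components constant.\<close>
lemma y_square_const:
  assumes "s \<in> I" "t \<in> I"
  shows "(yc (\<gamma> s))^2 = (yc (\<gamma> t))^2"
proof -
  have "xc (lam t) + (yc (\<gamma> s))^2 * zc (lam t) = 0"
    using switching_coords(1)[OF assms(1)] covector_xz_const[OF assms] by simp
  moreover have "xc (lam t) + (yc (\<gamma> t))^2 * zc (lam t) = 0"
    using switching_coords(1)[OF assms(2)] .
  ultimately have "(yc (\<gamma> s))^2 * zc (lam t) = (yc (\<gamma> t))^2 * zc (lam t)"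
    by linarith
  then show ?thesis
    using covector_z_nonzero[OF assms(2)] by simp
qed

text \<open>The second switching function vanishes identically, hence so does its derivative.\<close>
lemma control1_y_zero:
  assumes "t \<in> I" "t \<notin> N"
  shows "u1 t * yc (\<gamma> t) = 0"
proof -
  have "- 2 * u1 t * yc (\<gamma> t) * zc (lam t) = 0"
    using has_real_derivative_locally_const[OF covector_coords_derivative(2)[OF assms] open_interval assms(1)]
      switching_coords(2) assms(1) by simp
  then show ?thesis
    using covector_z_nonzero[OF assms(1)] by simp
qed

lemma control2_y_zero:
  assumes "t \<in> I" "t \<notin> N"
  shows "u2 t * yc (\<gamma> t) = 0"
proof -
  have "((\<lambda>s. yc (\<gamma> s) * yc (\<gamma> s)) has_real_derivative u2 t * yc (\<gamma> t) + u2 t * yc (\<gamma> t)) (at t)"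
    using DERIV_mult[OF state_coords_derivative(1)[OF assms] state_coords_derivative(1)[OF assms]] .
  then have "u2 t * yc (\<gamma> t) + u2 t * yc (\<gamma> t) = 0"
    by (rule has_real_derivative_locally_const[OF _ open_interval assms(1)])
      (use y_square_const[OF _ assms(1)] in \<open>simp add: power2_eq_square\<close>)
  then show ?thesis by simp
qed

theorem line_or_constant:
  "(\<exists>z0. \<forall>t\<in>I. yc (\<gamma> t) = 0 \<and> zc (\<gamma> t) = z0) \<or> (\<forall>s\<in>I. \<forall>t\<in>I. \<gamma> s = \<gamma> t)"
proof (cases "\<exists>t0\<in>I. yc (\<gamma> t0) = 0")
  case True
  then obtain t0 where "t0 \<in> I" "yc (\<gamma> t0) = 0" by blast
  then have y_zero: "yc (\<gamma> t) = 0" if "t \<in> I" for t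
    using y_square_const[OF that \<open>t0 \<in> I\<close>] \<open>yc (\<gamma> t0) = 0\<close> by simp
  have "zc (\<gamma> t) = zc (\<gamma> t0)" if "t \<in> I" for t
  proof (rule zero_derivative_ae_const[OF abs_cont_on_coords(3)[OF abs_cont_state] _ that \<open>t0 \<in> I\<close>])
    fix s assume "s \<in> I" "s \<notin> N"
    then show "((\<lambda>s. zc (\<gamma> s)) has_real_derivative 0) (at s)"
      using state_coords_derivative(2)[OF \<open>s \<in> I\<close> \<open>s \<notin> N\<close>] y_zero[OF \<open>s \<in> I\<close>] by simp
  qed
  with y_zero show ?thesis by blast
next
  case False
  have "\<gamma> s = \<gamma> t" if "s \<in> I" "t \<in> I" for s t
  proof (rule abs_cont_on_zero_derivative_ae_const[OF abs_cont_state interval null _ that])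
    fix r assume r: "r \<in> I" "r \<notin> N"
    with False have "yc (\<gamma> r) \<noteq> 0" by blast
    then have "u1 r = 0" "u2 r = 0"
      using control1_y_zero[OF r] control2_y_zero[OF r] by simp_all
    then show "(\<gamma> has_vector_derivative 0) (at r)"
      using state_eq[OF r] by simp
  qed
  then show ?thesis by blast
qed

end

lemma extremal_pair_abnormal_arc_data:
  assumes "extremal_pair T lam \<gamma> u1 u2" "0 \<le> a" "b \<le> T" "abnormal_arc lam \<gamma> a b"
  obtains N where "abnormal_arc_data lam \<gamma> u1 u2 {a<..<b} N"
proof -
  have adm: "admissible T \<gamma> u1 u2" and "abs_cont_on {0..T} lam" and "\<forall>t\<in>{0..T}. lam t \<noteq> 0"
    and adjoint: "AE t in lebesgue_on {0..T}.
      (lam has_vector_derivative (0, - 2 * u1 t * yc (\<gamma> t) * zc (lam t), 0)) (at t)"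
    using assms(1) unfolding extremal_pair_def by blast+
  moreover have "abs_cont_on {0..T} \<gamma>" and state: "AE t in lebesgue_on {0..T}.
      (\<gamma> has_vector_derivative (u1 t *\<^sub>R X1 (\<gamma> t) + u2 t *\<^sub>R X2 (\<gamma> t))) (at t)"
    using adm unfolding admissible_def by (blast, auto elim: eventually_mono)
  moreover have measurable: "{0..T} \<in> sets lebesgue" by simp
  moreover obtain N1 where "N1 \<in> null_sets lebesgue" "\<And>t. t \<in> {0..T} \<Longrightarrow> t \<notin> N1 \<Longrightarrow>
      (\<gamma> has_vector_derivative (u1 t *\<^sub>R X1 (\<gamma> t) + u2 t *\<^sub>R X2 (\<gamma> t))) (at t)"
    using AE_lebesgue_on_null_set[OF state measurable] by blast
  moreover obtain N2 where "N2 \<in> null_sets lebesgue" "\<And>t. t \<in> {0..T} \<Longrightarrow> t \<notin> N2 \<Longrightarrow>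
      (lam has_vector_derivative (0, - 2 * u1 t * yc (\<gamma> t) * zc (lam t), 0)) (at t)"
    using AE_lebesgue_on_null_set[OF adjoint measurable] by blast
  moreover have "{a<..<b} \<subseteq> {0..T}"
    using assms(2,3) by auto
  ultimately have "abnormal_arc_data lam \<gamma> u1 u2 {a<..<b} (N1 \<union> N2)"
    using assms(4) unfolding abnormal_arc_def
    by unfold_locales (auto intro: abs_cont_on_subset)
  then show thesis by (rule that)
qed

lemma abnormal_arc_in_line:
  assumes "extremal_pair T lam \<gamma> u1 u2" "0 \<le> a" "b \<le> T" "abnormal_arc lam \<gamma> a b"
    and "\<exists>s\<in>{a<..<b}. \<exists>t\<in>{a<..<b}. \<gamma> s \<noteq> \<gamma> t"
  shows "\<exists>z0. \<forall>t\<in>{a<..<b}. yc (\<gamma> t) = 0 \<and> zc (\<gamma> t) = z0"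
proof -
  obtain N where "abnormal_arc_data lam \<gamma> u1 u2 {a<..<b} N"
    using extremal_pair_abnormal_arc_data[OF assms(1-4)] .
  then show ?thesis
    using abnormal_arc_data.line_or_constant assms(5) by blast
qed

lemma line_trajectory_abnormal_lift:
  assumes adm: "admissible T \<gamma> u1 u2" and line: "\<forall>t\<in>{0..T}. yc (\<gamma> t) = 0 \<and> zc (\<gamma> t) = z0"
  shows "extremal_pair T (\<lambda>_. (0, 0, 1)) \<gamma> u1 u2 \<and> abnormal_arc (\<lambda>_. (0, 0, 1)) \<gamma> 0 T"
proof -
  let ?lam = "\<lambda>_::real. (0::real, 0::real, 1::real)"
  have switching: "phi1 ?lam \<gamma> t = 0 \<and> phi2 ?lam \<gamma> t = 0" if "t \<in> {0..T}" for t
    using line that by (simp add: phi1_def phi2_def inner_X1 inner_X2 xc_def yc_def zc_def)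
  have "abs_cont_on {0..T} ?lam"
    unfolding abs_cont_on_def by (intro allI impI exI[of _ 1]) simp
  moreover have "AE t in lebesgue_on {0..T}.
      (?lam has_vector_derivative (0, - 2 * u1 t * yc (\<gamma> t) * zc (?lam t), 0)) (at t)"
    using line by (intro AE_I2) (simp add: zero_prod_def[symmetric] has_vector_derivative_const)
  moreover have "AE t in lebesgue_on {0..T}.
      u1 t * phi1 ?lam \<gamma> t + u2 t * phi2 ?lam \<gamma> t = 0 \<and> \<bar>phi1 ?lam \<gamma> t\<bar> + \<bar>phi2 ?lam \<gamma> t\<bar> = 0"
    using switching by (intro AE_I2) simp
  ultimately show ?thesis
    using adm switching unfolding extremal_pair_def abnormal_arc_def
    by (auto simp: zero_prod_def)
qed

theorem mainTheorem15:
  shows "(\<forall>T lam \<gamma> u1 u2 a b.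
            extremal_pair T lam \<gamma> u1 u2 \<and> 0 \<le> a \<and> a < b \<and> b \<le> T \<and>
            abnormal_arc lam \<gamma> a b \<and>
            (\<exists>s\<in>{a<..<b}. \<exists>t\<in>{a<..<b}. \<gamma> s \<noteq> \<gamma> t)
            \<longrightarrow> (\<exists>z0::real. \<forall>t\<in>{a<..<b}. yc (\<gamma> t) = 0 \<and> zc (\<gamma> t) = z0))
       \<and> (\<forall>T \<gamma> u1 u2 (z0::real).
            admissible T \<gamma> u1 u2 \<and> (\<forall>t\<in>{0..T}. yc (\<gamma> t) = 0 \<and> zc (\<gamma> t) = z0)
            \<longrightarrow> (\<exists>lam. extremal_pair T lam \<gamma> u1 u2 \<and> abnormal_arc lam \<gamma> 0 T))"
  using abnormal_arc_in_line line_trajectory_abnormal_lift by blast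

end
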